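(* Let $G$ be any game state and let $P$ be a game path starting at $G$ which does not follow the Split-First Strategy. Then either there exists a game path starting at $G$ that is strictly longer than $P$, or there exists a game path starting at $G$ that follows the Split-First Strategy and has the same length as $P$.
   Context: Fibonacci numbers are indexed by $F_1=1$, $F_2=2$, $F_{i+1}=F_i+F_{i-1}$. A game state is a finite multiset of Fibonacci numbers (tracked by index). The legal moves are: $C_1$: replace $F_1,F_1$ by $F_2$; for $i\ge 2$, $C_i$: replace $F_{i-1},F_i$ by $F_{i+1}$ (a "combining move"); $S_2$: replace $F_2,F_2$ by $F_1,F_3$; for $i\ge 3$, $S_i$: replace $F_i,F_i$ by $F_{i-2},F_{i+1}$ (a "splitting move"). Here $C_1$ is grouped with the splitting moves, and "combining move" means $C_i$ with $i\ge 2$. Every sequence of legal moves is finite. A game path from a state $G$ is a sequence of legal moves starting at $G$ and continuing until no legal move is available; its length is its number of moves. A game path follows the Split-First Strategy if at each state along it: whenever some splitting move or $C_1$ is available, the move taken is one of those (any choice); otherwise the move taken is the combining move $C_i$ ($i\ge 2$) with the smallest index $i$ among those available. *)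

theory Defs
  imports Main "HOL-Library.Multiset"
begin

text \<open>A game state is a finite multiset of Fibonacci numbers, tracked by their
indices (index i stands for F_i, with F_1 = 1, F_2 = 2); all indices are at least 1.\<close>

definition valid_state :: "nat multiset \<Rightarrow> bool" where
  "valid_state G \<longleftrightarrow> (\<forall>i \<in># G. 1 \<le> i)"

datatype move = Comb nat | Split nat

text \<open>Legality of moves. Comb 1 is C_1 (F_1,F_1 to F_2); Comb i for i>=2 is C_i
(F_(i-1),F_i to F_(i+1)); Split 2 is S_2 (F_2,F_2 to F_1,F_3); Split i for i>=3 is S_i
(F_i,F_i to F_(i-2),F_(i+1)).\<close>

fun legal :: "move \<Rightarrow> nat multiset \<Rightarrow> bool" where
  "legal (Comb i) G = (if i = 1 then 2 \<le> count G 1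
                       else 2 \<le> i \<and> 1 \<le> count G (i - 1) \<and> 1 \<le> count G i)"
| "legal (Split i) G = (2 \<le> i \<and> 2 \<le> count G i)"

fun apply_move :: "move \<Rightarrow> nat multiset \<Rightarrow> nat multiset" where
  "apply_move (Comb i) G = (if i = 1 then G - {#1, 1#} + {#2#}
                            else G - {#i - 1, i#} + {#i + 1#})"
| "apply_move (Split i) G = (if i = 2 then G - {#2, 2#} + {#1, 3#}
                             else G - {#i, i#} + {#i - 2, i + 1#})"

definition split_type :: "move \<Rightarrow> bool" where
  "split_type m \<longleftrightarrow> m = Comb 1 \<or> (\<exists>i. m = Split i)"

definition combining :: "move \<Rightarrow> bool" where
  "combining m \<longleftrightarrow> (\<exists>i. 2 \<le> i \<and> m = Comb i)"

definition terminal :: "nat multiset \<Rightarrow> bool" where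
  "terminal G \<longleftrightarrow> (\<forall>m. \<not> legal m G)"

definition states :: "nat multiset \<Rightarrow> move list \<Rightarrow> nat \<Rightarrow> nat multiset" where
  "states G ms k = fold apply_move (take k ms) G"

definition game_path :: "nat multiset \<Rightarrow> move list \<Rightarrow> bool" where
  "game_path G ms \<longleftrightarrow>
     (\<forall>k < length ms. legal (ms ! k) (states G ms k)) \<and>
     terminal (states G ms (length ms))"

definition split_first_move :: "nat multiset \<Rightarrow> move \<Rightarrow> bool" where
  "split_first_move H m \<longleftrightarrow>
     (if \<exists>m'. split_type m' \<and> legal m' H
      then split_type m \<and> legal m H
      else (\<exists>i. m = Comb i \<and> 2 \<le> i \<and> legal (Comb i) H \<and>
                (\<forall>j. 2 \<le> j \<and> legal (Comb j) H \<longrightarrow> i \<le> j)))"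

definition follows_split_first :: "nat multiset \<Rightarrow> move list \<Rightarrow> bool" where
  "follows_split_first G ms \<longleftrightarrow>
     (\<forall>k < length ms. split_first_move (states G ms k) (ms ! k))"

end

theory Submission
  imports Defs
begin

text \<open>Since every
move lowers the potential \<open>\<Sum> (3 + [i \<ge> 2] i)\<close> of the state, it suffices, by induction, to
replace a first move that the strategy does not prescribe by one that it does, without
shortening the remaining game.

If a splitting move (or \<open>C\<^sub>1\<close>) \<open>c\<close> is available, it can be brought to the front of any path at
the cost of at most one move: a later move disjoint from \<open>c\<close> commutes with it, and a move
overlapping \<open>c\<close> has its effect recovered after \<open>c\<close> by one or two moves (for instance \<open>S\<^sub>j\<close>
followed by \<open>C\<^sub>j\<^sub>-\<^sub>1\<close> acts as \<open>C\<^sub>j\<close>). Otherwise all multiplicities are at most one, and the least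
available combining move \<open>C\<^sub>j\<close> can be postponed past the Split-First continuation of a larger
\<open>C\<^sub>i\<close>: that continuation can only turn \<open>C\<^sub>i\<close> into \<open>C\<^sub>i\<^sub>+\<^sub>1\<close> by \<open>S\<^sub>i\<^sub>+\<^sub>1\<close>, repeatedly, until it plays
\<open>C\<^sub>j\<close> itself.\<close>

fun consumed :: "move \<Rightarrow> nat multiset" where
  "consumed (Comb i) = (if i = 1 then {#1, 1#} else {#i - 1, i#})"
| "consumed (Split i) = {#i, i#}"

fun produced :: "move \<Rightarrow> nat multiset" where
  "produced (Comb i) = {#i + 1#}"
| "produced (Split i) = (if i = 2 then {#1, 3#} else {#i - 2, i + 1#})"

fun admissible :: "move \<Rightarrow> bool" where
  "admissible (Comb i) \<longleftrightarrow> 1 \<le> i"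
| "admissible (Split i) \<longleftrightarrow> 2 \<le> i"

lemma apply_move_eq: "apply_move m G = G - consumed m + produced m"
  by (cases m) auto

lemma double_subseteq_mset_iff: "{#a, a#} \<subseteq># G \<longleftrightarrow> 2 \<le> count G a"
  by (auto simp: subseteq_mset_def)

lemma pair_subseteq_mset_iff:
  "a \<noteq> b \<Longrightarrow> {#a, b#} \<subseteq># G \<longleftrightarrow> 1 \<le> count G a \<and> 1 \<le> count G b"
  by (auto simp: subseteq_mset_def)

lemma legal_iff_consumed: "legal m G \<longleftrightarrow> admissible m \<and> consumed m \<subseteq># G"
proof (cases m)
  case (Comb i)
  then show ?thesis
    by (cases "i = 0 \<or> i = 1") (auto simp: double_subseteq_mset_iff pair_subseteq_mset_iff)
qed (simp add: double_subseteq_mset_iff)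

definition potential :: "nat multiset \<Rightarrow> nat" where
  "potential H = (\<Sum>i\<in>#H. if i \<le> 1 then 3 else i + 3)"

lemma potential_apply_move_less:
  assumes "legal m H"
  shows "potential (apply_move m H) < potential H"
proof -
  obtain R where H: "H = consumed m + R"
    using assms by (auto simp: legal_iff_consumed subset_mset.le_iff_add)
  have "potential (produced m) < potential (consumed m)"
    using assms by (cases m) (auto simp: potential_def legal_iff_consumed)
  then show ?thesis
    by (simp add: apply_move_eq H potential_def)
qed

lemma states_0 [simp]: "states G ms 0 = G"
  by (simp add: states_def)

lemma states_Cons_Suc [simp]: "states G (m # ms) (Suc k) = states (apply_move m G) ms k"
  by (simp add: states_def)

lemma game_path_Nil: "game_path G [] \<longleftrightarrow> terminal G"
  by (simp add: game_path_def)

lemma game_path_Cons: "game_path G (m # ms) \<longleftrightarrow> legal m G \<and> game_path (apply_move m G) ms"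
  by (auto simp: game_path_def less_Suc_eq_0_disj)

lemma follows_split_first_Nil: "follows_split_first G []"
  by (simp add: follows_split_first_def)

lemma follows_split_first_Cons:
  "follows_split_first G (m # ms) \<longleftrightarrow>
     split_first_move G m \<and> follows_split_first (apply_move m G) ms"
  by (auto simp: follows_split_first_def less_Suc_eq_0_disj)

definition move_step :: "nat multiset \<Rightarrow> nat multiset \<Rightarrow> bool" where
  "move_step X Y \<longleftrightarrow> (\<exists>m. legal m X \<and> Y = apply_move m X)"

lemma move_stepI: "legal m X \<Longrightarrow> move_step X (apply_move m X)"
  by (auto simp: move_step_def)

lemma game_path_longer_if_tranclp:
  assumes "move_step\<^sup>+\<^sup>+ X Y" and "game_path Y ms"
  shows "\<exists>ms'. game_path X ms' \<and> length ms < length ms'"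
  using assms(1)
proof (induction rule: converse_tranclp_induct)
  case (base X)
  then obtain m where "legal m X" "Y = apply_move m X" by (auto simp: move_step_def)
  then show ?case using assms(2) by (intro exI[of _ "m # ms"]) (simp add: game_path_Cons)
next
  case (step X Z)
  then obtain m where "legal m X" "Z = apply_move m X" by (auto simp: move_step_def)
  moreover obtain ms' where "game_path Z ms'" "length ms < length ms'" using step.IH by blast
  ultimately show ?case by (intro exI[of _ "m # ms'"]) (simp add: game_path_Cons)
qed

lemma apply_move_commute:
  assumes "admissible a" "admissible b" "consumed a + consumed b \<subseteq># X"
  shows "legal b (apply_move a X)"
    and "apply_move b (apply_move a X) = apply_move a (apply_move b X)"
proof -
  obtain R where X: "X = consumed a + consumed b + R"
    using assms(3) by (metis subset_mset.le_iff_add)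
  have a: "apply_move a X = consumed b + (R + produced a)"
    by (simp add: apply_move_eq X add.assoc)
  have b: "apply_move b X = consumed a + (R + produced b)"
    by (simp add: apply_move_eq X add.commute add.left_commute)
  show "legal b (apply_move a X)"
    using assms(2) by (simp add: a legal_iff_consumed)
  show "apply_move b (apply_move a X) = apply_move a (apply_move b X)"
    unfolding a b by (simp add: apply_move_eq add.commute add.left_commute)
qed

lemma disjoint_consumed_subseteq:
  assumes "consumed a \<subseteq># X" "consumed b \<subseteq># X" "set_mset (consumed a) \<inter> set_mset (consumed b) = {}"
  shows "consumed a + consumed b \<subseteq># X"
  using assms unfolding subseteq_mset_def
  by (metis add.right_neutral add_0 count_eq_zero_iff count_union disjoint_iff)

lemma apply_move_commute_disjoint:
  assumes "legal a X" "legal b X" "set_mset (consumed a) \<inter> set_mset (consumed b) = {}"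
  shows "legal b (apply_move a X)"
    and "apply_move b (apply_move a X) = apply_move a (apply_move b X)"
  using assms apply_move_commute[of a b X] disjoint_consumed_subseteq[of a X b]
  by (simp_all add: legal_iff_consumed)

lemma Comb_then_Split:
  assumes "legal (Comb k) B" "1 \<le> count B (k + 1)"
  shows "legal (Split (k + 1)) (apply_move (Comb k) B)"
    and "apply_move (Split (k + 1)) (apply_move (Comb k) B) = apply_move (Comb (k + 1)) B"
proof -
  have "k = 1 \<or> (\<exists>n. k = n + 2)"
    using assms(1) by (cases "k = 1") (auto intro: exI[of _ "k - 2"])
  then have "legal (Split (k + 1)) (apply_move (Comb k) B) \<and>
      apply_move (Split (k + 1)) (apply_move (Comb k) B) = apply_move (Comb (k + 1)) B"
    using assms by (elim disjE exE; simp add: multiset_eq_iff in_diff_count eval_nat_numeral)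
  then show "legal (Split (k + 1)) (apply_move (Comb k) B)"
    "apply_move (Split (k + 1)) (apply_move (Comb k) B) = apply_move (Comb (k + 1)) B"
    by blast+
qed

lemma Split_then_Comb:
  assumes "2 \<le> j" "2 \<le> count B j" "1 \<le> count B (j - 1)"
  shows "move_step\<^sup>+\<^sup>+ (apply_move (Split j) B) (apply_move (Comb j) B)"
proof -
  have "j = 2 \<or> (\<exists>n. j = n + 3)"
    using assms(1) by (cases "j = 2") (auto intro: exI[of _ "j - 3"])
  then have "legal (Comb (j - 1)) (apply_move (Split j) B) \<and>
      apply_move (Comb (j - 1)) (apply_move (Split j) B) = apply_move (Comb j) B"
    using assms by (elim disjE exE; simp add: multiset_eq_iff in_diff_count eval_nat_numeral)
  then show ?thesis by (metis move_stepI tranclp.r_into_trancl)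
qed

lemma Split_then_Split_Comb:
  assumes "2 \<le> j" "2 \<le> count B j" "1 \<le> count B (j + 1)"
  shows "move_step\<^sup>+\<^sup>+ (apply_move (Split j) B) (apply_move (Comb (j + 1)) B)"
proof -
  define B' where "B' = apply_move (Split (j + 1)) (apply_move (Split j) B)"
  have "j = 2 \<or> (\<exists>n. j = n + 3)"
    using assms(1) by (cases "j = 2") (auto intro: exI[of _ "j - 3"])
  then have "legal (Split (j + 1)) (apply_move (Split j) B) \<and> legal (Comb (j - 1)) B' \<and>
      apply_move (Comb (j - 1)) B' = apply_move (Comb (j + 1)) B"
    using assms by (elim disjE exE; simp add: B'_def multiset_eq_iff in_diff_count eval_nat_numeral)
  then show ?thesis unfolding B'_def
    by (metis move_stepI tranclp.r_into_trancl tranclp.trancl_into_trancl)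
qed

lemma overlapping_split_type_resolves:
  assumes "split_type c" "legal c B" "legal r B" "r \<noteq> c"
    and "\<not> consumed c + consumed r \<subseteq># B"
  shows "move_step\<^sup>+\<^sup>+ (apply_move c B) (apply_move r B)"
proof -
  obtain x where x: "x \<in># consumed c" "x \<in># consumed r"
    using assms(2,3,5) disjoint_consumed_subseteq by (fastforce simp: legal_iff_consumed)
  from assms(1) consider "c = Comb 1" | j where "c = Split j"
    by (auto simp: split_type_def)
  then show ?thesis
  proof cases
    case 1
    then have "r = Comb 2"
      using x assms(3,4) by (cases r) (auto split: if_splits)
    moreover have "legal (Comb 1) B" "1 \<le> count B 2"
      using assms(2,3) 1 \<open>r = Comb 2\<close> by simp_all
    ultimately show ?thesis
      using Comb_then_Split[of 1 B, unfolded one_add_one] 1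
      by (metis move_stepI tranclp.r_into_trancl)
  next
    case (2 j)
    then have "r = Comb j \<or> r = Comb (j + 1)"
      using x assms(2,3,4) by (cases r) (auto split: if_splits)
    then show ?thesis
      using Split_then_Comb[of j B] Split_then_Split_Comb[of j B] assms(2,3) 2 by auto
  qed
qed

lemma exchange_split_type_move:
  assumes "split_type c" "game_path A ms" "legal c A"
  shows "\<exists>T. game_path (apply_move c A) T \<and> length ms \<le> Suc (length T)"
  using assms(2,3)
proof (induction ms arbitrary: A)
  case Nil
  then show ?case by (auto simp: game_path_Nil terminal_def)
next
  case (Cons r ms)
  then have r: "legal r A" and ms: "game_path (apply_move r A) ms"
    by (auto simp: game_path_Cons)
  consider "r = c" | "r \<noteq> c" "\<not> consumed c + consumed r \<subseteq># A"
    | "consumed c + consumed r \<subseteq># A"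
    by blast
  then show ?case
  proof cases
    case 1
    then show ?thesis using ms by auto
  next
    case 2
    then have "move_step\<^sup>+\<^sup>+ (apply_move c A) (apply_move r A)"
      using overlapping_split_type_resolves assms(1) Cons.prems(2) r by blast
    then show ?thesis
      using game_path_longer_if_tranclp ms by fastforce
  next
    case 3
    have adm: "admissible c" "admissible r"
      using Cons.prems(2) r by (auto simp: legal_iff_consumed)
    have "consumed r + consumed c \<subseteq># A"
      using 3 by (simp only: add.commute)
    note commute = apply_move_commute[OF adm 3] apply_move_commute[OF adm(2,1) this]
    obtain T where "game_path (apply_move r (apply_move c A)) T" "length ms \<le> Suc (length T)"
      using Cons.IH[OF ms commute(3)] commute(4) by auto
    then show ?thesis
      using commute(1) by (intro exI[of _ "r # T"]) (simp add: game_path_Cons del: apply_move.simps)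
  qed
qed

definition split_free :: "nat multiset \<Rightarrow> bool" where
  "split_free H \<longleftrightarrow> (\<forall>m. split_type m \<longrightarrow> \<not> legal m H)"

definition least_combining :: "nat multiset \<Rightarrow> nat \<Rightarrow> bool" where
  "least_combining H j \<longleftrightarrow>
     2 \<le> j \<and> legal (Comb j) H \<and> (\<forall>l. 2 \<le> l \<and> legal (Comb l) H \<longrightarrow> j \<le> l)"

lemma split_first_move_iff:
  "split_first_move H m \<longleftrightarrow>
     (if split_free H then \<exists>j. m = Comb j \<and> least_combining H j else split_type m \<and> legal m H)"
  by (auto simp: split_first_move_def split_free_def least_combining_def)

lemma split_free_count_le_1:
  assumes "split_free H" "1 \<le> x"
  shows "count H x \<le> 1"
proof -
  have "split_type (if x = 1 then Comb 1 else Split x)"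
    by (simp add: split_type_def)
  then have "\<not> legal (if x = 1 then Comb 1 else Split x) H"
    using assms(1) unfolding split_free_def by blast
  then show ?thesis
    using assms(2) by (auto split: if_splits)
qed

lemma split_free_not_split_first:
  assumes "split_free H" "legal m H" "\<not> split_first_move H m"
  obtains i j where "m = Comb i" "least_combining H j" "j < i"
proof -
  obtain i where m: "m = Comb i" and i: "2 \<le> i"
    using assms(1,2) by (cases m) (auto simp: split_free_def split_type_def split: if_splits)
  define j where "j = (LEAST l. 2 \<le> l \<and> legal (Comb l) H)"
  have "2 \<le> j \<and> legal (Comb j) H"
    unfolding j_def by (rule LeastI[of _ i]) (use assms(2) m i in blast)
  moreover have "\<forall>l. 2 \<le> l \<and> legal (Comb l) H \<longrightarrow> j \<le> l"
    unfolding j_def by (blast intro: Least_le)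
  ultimately have "least_combining H j"
    unfolding least_combining_def by blast
  moreover have "j \<noteq> i"
    using assms(1,3) m calculation by (auto simp: split_first_move_iff)
  moreover have "j \<le> i"
    using calculation(1) assms(2) m i by (auto simp: least_combining_def)
  ultimately show ?thesis using that m by simp
qed

lemma legal_Comb_after_distant_Comb:
  assumes "2 \<le> i" "i + 2 \<le> k" "legal (Comb k) H"
  shows "legal (Comb i) (apply_move (Comb k) H) \<longleftrightarrow> legal (Comb i) H"
  using assms by (auto simp: in_diff_count)

lemma count_apply_Comb:
  assumes "2 \<le> k" "legal (Comb k) H"
  shows "count (apply_move (Comb k) H) x =
    (if x = k + 1 then count H x + 1 else if x = k - 1 \<or> x = k then count H x - 1 else count H x)"
  using assms by auto

lemma split_first_after_distant_Comb:
  assumes "split_free H" "least_combining H j" "j + 2 \<le> k" "legal (Comb k) H"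
    and "split_first_move (apply_move (Comb k) H) q"
  shows "q = Split (k + 1) \<and> 1 \<le> count H (k + 1) \<or> q = Comb j"
proof (cases "split_free (apply_move (Comb k) H)")
  case True
  then obtain i where q: "q = Comb i" and "least_combining (apply_move (Comb k) H) i"
    using assms(5) by (auto simp: split_first_move_iff)
  then have i: "2 \<le> i" "legal (Comb i) (apply_move (Comb k) H)"
    and imin: "\<And>l. 2 \<le> l \<Longrightarrow> legal (Comb l) (apply_move (Comb k) H) \<Longrightarrow> i \<le> l"
    unfolding least_combining_def by blast+
  have j: "2 \<le> j" "legal (Comb j) H" and jmin: "\<And>l. 2 \<le> l \<Longrightarrow> legal (Comb l) H \<Longrightarrow> j \<le> l"
    using assms(2) unfolding least_combining_def by blast+
  have "i \<le> j"
    using imin j legal_Comb_after_distant_Comb[OF j(1) assms(3,4)] by blast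
  then have "legal (Comb i) H"
    using i legal_Comb_after_distant_Comb[OF i(1) _ assms(4)] assms(3) by simp
  then have "i = j"
    using jmin i(1) \<open>i \<le> j\<close> by (simp add: le_antisym)
  then show ?thesis using q by simp
next
  case False
  then have q: "split_type q" "legal q (apply_move (Comb k) H)"
    using assms(5) by (auto simp: split_first_move_iff)
  have k: "4 \<le> k"
    using assms(2,3) by (simp add: least_combining_def)
  have count: "\<And>x. count (apply_move (Comb k) H) x =
    (if x = k + 1 then count H x + 1 else if x = k - 1 \<or> x = k then count H x - 1 else count H x)"
    using count_apply_Comb[OF _ assms(4)] k by simp
  have le1: "\<And>x. 1 \<le> x \<Longrightarrow> count H x \<le> 1"
    using split_free_count_le_1[OF assms(1)] .
  show ?thesis
  proof (cases q)
    case (Comb i)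
    then have "2 \<le> count (apply_move (Comb k) H) 1"
      using q by (simp add: split_type_def del: apply_move.simps)
    then show ?thesis using k le1[of 1] unfolding count by (simp split: if_splits)
  next
    case (Split l)
    then have "2 \<le> l" "2 \<le> count (apply_move (Comb k) H) l"
      using q(2) by (simp_all del: apply_move.simps)
    then show ?thesis using Split le1[of l] unfolding count by (auto split: if_splits)
  qed
qed

lemma exchange_least_combining:
  assumes "split_free H" "least_combining H j"
    and "game_path (apply_move (Comb k) H) Q" "follows_split_first (apply_move (Comb k) H) Q"
    and "j + 2 \<le> k" "legal (Comb k) H"
  shows "\<exists>T. game_path (apply_move (Comb j) (apply_move (Comb k) H)) T \<and> length Q \<le> Suc (length T)"
  using assms(3-6)
proof (induction Q arbitrary: k)
  case Nil
  have "legal (Comb j) (apply_move (Comb k) H)"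
    using assms(2) legal_Comb_after_distant_Comb[of j k H] Nil.prems(3,4)
    unfolding least_combining_def by blast
  then show ?case
    using Nil.prems(1) unfolding game_path_Nil terminal_def by blast
next
  case (Cons q Q)
  let ?A = "apply_move (Comb k) H"
  have q: "split_first_move ?A q"
    and Q: "game_path (apply_move q ?A) Q" "follows_split_first (apply_move q ?A) Q"
    using Cons.prems(1,2) by (simp_all add: game_path_Cons follows_split_first_Cons del: apply_move.simps)
  have j: "2 \<le> j" "legal (Comb j) ?A"
    using assms(2) legal_Comb_after_distant_Comb[of j k H] Cons.prems(3,4)
    unfolding least_combining_def by blast+
  consider "q = Comb j" | "q = Split (k + 1)" "1 \<le> count H (k + 1)"
    using split_first_after_distant_Comb[OF assms(1,2) Cons.prems(3,4) q] by blast
  then show ?case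
  proof cases
    case 1
    then show ?thesis using Q(1) by auto
  next
    case 2
    have split: "legal (Split (k + 1)) ?A" and step: "apply_move q ?A = apply_move (Comb (k + 1)) H"
      using Comb_then_Split[OF Cons.prems(4) 2(2)] 2(1) by simp_all
    have "legal (Comb (k + 1)) H"
      using Cons.prems(3,4) 2(2) by simp
    then obtain T where T: "game_path (apply_move (Comb j) (apply_move (Comb (k + 1)) H)) T"
      "length Q \<le> Suc (length T)"
      using Cons.IH[of "k + 1"] Q step Cons.prems(3) by auto
    have "set_mset (consumed (Comb j)) \<inter> set_mset (consumed (Split (k + 1))) = {}"
      using j(1) Cons.prems(3) by auto
    note commute = apply_move_commute_disjoint[OF j(2) split this]
    show ?thesis
      using T step commute 2(1)
      by (intro exI[of _ "Split (k + 1) # T"]) (simp add: game_path_Cons del: apply_move.simps)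
  qed
qed

lemma exchange_split_free:
  assumes "split_free H" "least_combining H j" "j < i" "legal (Comb i) H"
    and "game_path (apply_move (Comb i) H) Q" "follows_split_first (apply_move (Comb i) H) Q"
  shows "\<exists>T. game_path (apply_move (Comb j) H) T \<and> length Q \<le> length T"
proof -
  have j: "2 \<le> j" "legal (Comb j) H"
    using assms(2) unfolding least_combining_def by blast+
  show ?thesis
  proof (cases "i = j + 1")
    case True
    then have "1 \<le> count H (j + 1)"
      using assms(4) j(1) by simp
    then have "legal (Split (j + 1)) (apply_move (Comb j) H)"
      "apply_move (Split (j + 1)) (apply_move (Comb j) H) = apply_move (Comb i) H"
      using Comb_then_Split[OF j(2)] True by simp_all
    then show ?thesis
      using assms(5) by (intro exI[of _ "Split (j + 1) # Q"]) (simp add: game_path_Cons del: apply_move.simps)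
  next
    case False
    then obtain T where T: "game_path (apply_move (Comb j) (apply_move (Comb i) H)) T"
      "length Q \<le> Suc (length T)"
      using exchange_least_combining[OF assms(1,2,5,6) _ assms(4)] assms(3) by auto
    have "set_mset (consumed (Comb j)) \<inter> set_mset (consumed (Comb i)) = {}"
      using j(1) assms(3) False by auto
    note commute = apply_move_commute_disjoint[OF j(2) assms(4) this]
    show ?thesis
      using T commute by (intro exI[of _ "Comb i # T"]) (simp add: game_path_Cons del: apply_move.simps)
  qed
qed

lemma split_first_alternative:
  assumes "legal m H" "\<not> split_first_move H m"
    and "game_path (apply_move m H) Q" "follows_split_first (apply_move m H) Q"
  obtains m' T where "split_first_move H m'" "game_path (apply_move m' H) T" "length Q \<le> length T"
proof (cases "split_free H")
  case True
  then obtain i j where "m = Comb i" "least_combining H j" "j < i"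
    using split_free_not_split_first assms(1,2) by blast
  moreover from this have "split_first_move H (Comb j)"
    using True by (simp add: split_first_move_iff)
  ultimately show ?thesis
    using exchange_split_free[OF True] assms that by blast
next
  case False
  then obtain s where s: "split_type s" "legal s H"
    unfolding split_free_def by blast
  then have "split_first_move H s"
    using False by (simp add: split_first_move_iff)
  moreover have "game_path H (m # Q)"
    using assms(1,3) by (simp add: game_path_Cons del: apply_move.simps)
  then obtain T where "game_path (apply_move s H) T" "length (m # Q) \<le> Suc (length T)"
    using exchange_split_type_move s by blast
  ultimately show ?thesis
    using that by simp
qed

lemma split_first_path_at_least_as_long:
  assumes "game_path H P"
  shows "\<exists>Q. game_path H Q \<and> follows_split_first H Q \<and> length P \<le> length Q"
  using assms
proof (induction "potential H" arbitrary: H P rule: less_induct)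
  case less
  show ?case
  proof (cases P)
    case Nil
    then show ?thesis
      using less.prems follows_split_first_Nil by blast
  next
    case (Cons m P')
    then have m: "legal m H" and P': "game_path (apply_move m H) P'"
      using less.prems by (simp_all add: game_path_Cons del: apply_move.simps)
    obtain Q where Q: "game_path (apply_move m H) Q" "follows_split_first (apply_move m H) Q"
      "length P' \<le> length Q"
      using less.hyps[OF potential_apply_move_less[OF m] P'] by blast
    show ?thesis
    proof (cases "split_first_move H m")
      case True
      then show ?thesis
        using Q m Cons
        by (intro exI[of _ "m # Q"]) (simp add: game_path_Cons follows_split_first_Cons del: apply_move.simps)
    next
      case False
      then obtain m' T where m': "split_first_move H m'" and T: "game_path (apply_move m' H) T"
        and "length Q \<le> length T"
        using split_first_alternative[OF m _ Q(1,2)] by blast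
      moreover have "legal m' H"
        using m' by (auto simp: split_first_move_def split: if_splits)
      moreover obtain Q' where "game_path (apply_move m' H) Q'"
        "follows_split_first (apply_move m' H) Q'" "length T \<le> length Q'"
        using less.hyps[OF potential_apply_move_less[OF \<open>legal m' H\<close>] T] by blast
      ultimately show ?thesis
        using Q(3) Cons
        by (intro exI[of _ "m' # Q'"]) (simp add: game_path_Cons follows_split_first_Cons del: apply_move.simps)
    qed
  qed
qed

theorem lemma2p3:
  fixes G :: "nat multiset" and P :: "move list"
  assumes "valid_state G"
    and "game_path G P"
    and "\<not> follows_split_first G P"
  shows "(\<exists>Q. game_path G Q \<and> length Q > length P) \<or>
         (\<exists>Q. game_path G Q \<and> follows_split_first G Q \<and> length Q = length P)"
proof -
  \<comment> \<open>Neither \<open>valid_state G\<close> (no move consumes index 0) nor the failure of the strategy is needed.\<close>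
  obtain Q where "game_path G Q" "follows_split_first G Q" "length P \<le> length Q"
    using split_first_path_at_least_as_long[OF assms(2)] by blast
  then show ?thesis
    by (cases "length P < length Q") auto
qed

end
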